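(* Let $(\mathcal S,\mathcal Q,\Theta)$ be a Pufferfish scenario, $f:\mathcal X\to\mathbb R^d$ a query, and $\omega$ a continuous slice distribution on $\mathbb S^{d-1}$. Draw i.i.d. directions $U_1,\dots,U_m\sim\omega$. Assume $0\le\Delta^u_\infty\le\Delta_0$ for all $u$. Fix $\alpha>1$, $\varepsilon\ge0$, $\gamma\in(0,1)$. Let $\widehat\Delta_\infty(U_\ell)$ be random quantities satisfying $\Pr(\Delta^{U_\ell}_\infty\le\widehat\Delta_\infty(U_\ell)\text{ for all }\ell\in[m])\ge1-\gamma/2$, where the probability is over the conditional sampling used to form them. For $\sigma^2>0$ define $c(\sigma)=\frac{\alpha(\alpha-1)}{2\sigma^2}$, $\widehat\mu_m(\sigma)=\frac1m\sum_{\ell=1}^m\exp(c(\sigma)(\widehat\Delta_\infty(U_\ell))^2)$ and $b(\sigma)=\exp(c(\sigma)\Delta_0^2)$. If the Gaussian mechanism uses $N\sim\mathcal N(0,\sigma^2I_d)$ (independent of $X$) with $\sigma^2$ satisfying \[ \frac1{\alpha-1}\log\!\left(\widehat\mu_m(\sigma)+(b(\sigma)-1)\sqrt{\frac{\log(4/\gamma)}{2m}}\right)\le\varepsilon, \] then with probability at least $1-\gamma$ (over both the conditional sampling and the draw of $U_{1:m}$), $\mathcal M(X)=f(X)+N$ satisfies $(\alpha,\varepsilon,\omega)$-Joint-SRPP in $(\mathcal S,\mathcal Q,\Theta)$.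
   Context: Pufferfish scenario: secrets $\mathcal S$, pairs $\mathcal Q\subseteq\mathcal S\times\mathcal S$, priors $\Theta$; each $\theta$ is a joint law of secret $S$ and dataset $X$, with secret marginal $P^S_\theta$. $P^{f,s}_\theta$ is the law of $f(X)$ given $S=s$ under $\theta$; $\mathcal M^\theta_s$ the law of $\mathcal M(X)$ given $S=s$ under $\theta$. $\mathbb S^{d-1}$ is the unit sphere, $\Psi^u(a)=\langle a,u\rangle$, $\Psi^u_\#$ pushforward. $W_\infty(\nu,\mu)=\inf_{\pi\in\Pi(\nu,\mu)}\sup_{(x,y)\in\mathrm{supp}\,\pi}|x-y|$ for measures on $\mathbb R$. $\Delta^u_\infty:=\max_{(s_i,s_j)\in\mathcal Q,\theta\in\Theta}W_\infty(\Psi^u_\#P^{f,s_i}_\theta,\Psi^u_\#P^{f,s_j}_\theta)$. $\mathtt D_\alpha$ is R\'enyi divergence; $\mathtt{JSD}^\omega_\alpha(P\|Q)=\frac1{\alpha-1}\log\int\exp((\alpha-1)\mathtt D_\alpha(\Psi^u_\#P\|\Psi^u_\#Q))\,d\omega(u)$. $\mathcal M$ is $(\alpha,\varepsilon,\omega)$-Joint-SRPP in $(\mathcal S,\mathcal Q,\Theta)$ if $\mathtt{JSD}^\omega_\alpha(\mathcal M^\theta_{s_i}\|\mathcal M^\theta_{s_j})\le\varepsilon$ for all $\theta\in\Theta$ and $(s_i,s_j)\in\mathcal Q$ with $P^S_\theta(s_i),P^S_\theta(s_j)>0$. *)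

theory Defs
  imports "HOL-Probability.Probability"
begin

text \<open>A prior theta is represented by its secret marginal (a pmf on secrets) together
with the conditional law of the dataset X given S = s (a kernel s -> law of X).
This is a disintegration of the joint law of (S, X).\<close>

type_synonym ('s, 'x) prior = "'s pmf \<times> ('s \<Rightarrow> 'x measure)"

definition proj_meas :: "'a::euclidean_space \<Rightarrow> 'a measure \<Rightarrow> real measure" where
  "proj_meas u M = distr M borel (\<lambda>a. a \<bullet> u)"

definition msupp :: "(real \<times> real) measure \<Rightarrow> (real \<times> real) set" where
  "msupp \<pi> = {z. \<forall>e>0. emeasure \<pi> (ball z e) > 0}"

definition couplings :: "real measure \<Rightarrow> real measure \<Rightarrow> (real \<times> real) measure set" where
  "couplings \<nu> \<mu> = {\<pi>. sets \<pi> = sets (borel :: (real \<times> real) measure) \<and> prob_space \<pi> \<and>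
      distr \<pi> borel fst = \<nu> \<and> distr \<pi> borel snd = \<mu>}"

definition W_inf :: "real measure \<Rightarrow> real measure \<Rightarrow> ereal" where
  "W_inf \<nu> \<mu> = (INF \<pi>\<in>couplings \<nu> \<mu>. SUP z\<in>msupp \<pi>. ereal \<bar>fst z - snd z\<bar>)"

definition query_law :: "('x \<Rightarrow> 'a::euclidean_space) \<Rightarrow> ('s, 'x) prior \<Rightarrow> 's \<Rightarrow> 'a measure" where
  "query_law f \<theta> s = distr (snd \<theta> s) borel f"

text \<open>Delta^u_infty (the max over Q and Theta written as a supremum).\<close>
definition Delta_inf :: "('s \<times> 's) set \<Rightarrow> ('s, 'x) prior set \<Rightarrow> ('x \<Rightarrow> 'a::euclidean_space)
    \<Rightarrow> 'a \<Rightarrow> ereal" where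
  "Delta_inf Q \<Theta> f u = Sup {W_inf (proj_meas u (query_law f \<theta> si)) (proj_meas u (query_law f \<theta> sj))
      | si sj \<theta>. (si, sj) \<in> Q \<and> \<theta> \<in> \<Theta> \<and> pmf (fst \<theta>) si > 0 \<and> pmf (fst \<theta>) sj > 0}"

definition renyi_moment :: "real \<Rightarrow> real measure \<Rightarrow> real measure \<Rightarrow> ennreal" where
  "renyi_moment \<alpha> P Q = (if absolutely_continuous Q P
     then (\<integral>\<^sup>+ x. ennreal (enn2real (RN_deriv Q P x) powr \<alpha>) \<partial>Q) else \<infinity>)"

definition renyi_div :: "real \<Rightarrow> real measure \<Rightarrow> real measure \<Rightarrow> ereal" where
  "renyi_div \<alpha> P Q = (if renyi_moment \<alpha> P Q = \<infinity> then \<infinity>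
     else ereal (ln (enn2real (renyi_moment \<alpha> P Q)) / (\<alpha> - 1)))"

definition ereal_exp :: "ereal \<Rightarrow> ennreal" where
  "ereal_exp x = (case x of ereal r \<Rightarrow> ennreal (exp r) | PInfty \<Rightarrow> \<infinity> | MInfty \<Rightarrow> 0)"

definition ennreal_ln :: "ennreal \<Rightarrow> ereal" where
  "ennreal_ln x = (if x = \<infinity> then \<infinity> else if x = 0 then -\<infinity> else ereal (ln (enn2real x)))"

definition JSD :: "real \<Rightarrow> 'a::euclidean_space measure \<Rightarrow> 'a measure \<Rightarrow> 'a measure \<Rightarrow> ereal" where
  "JSD \<alpha> \<omega> P Q = ereal (1 / (\<alpha> - 1)) *
     ennreal_ln (\<integral>\<^sup>+ u. ereal_exp (ereal (\<alpha> - 1) * renyi_div \<alpha> (proj_meas u P) (proj_meas u Q)) \<partial>\<omega>)"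

text \<open>(alpha, eps, omega)-Joint-SRPP of a mechanism, given through the law of its output
  conditional on S = s under theta, \<open>mlaw \<theta> s\<close>.\<close>
definition joint_SRPP :: "real \<Rightarrow> real \<Rightarrow> 'a::euclidean_space measure \<Rightarrow> ('s \<times> 's) set
    \<Rightarrow> ('s, 'x) prior set \<Rightarrow> (('s, 'x) prior \<Rightarrow> 's \<Rightarrow> 'a measure) \<Rightarrow> bool" where
  "joint_SRPP \<alpha> \<epsilon> \<omega> Q \<Theta> mlaw \<longleftrightarrow>
     (\<forall>\<theta>\<in>\<Theta>. \<forall>si sj. (si, sj) \<in> Q \<and> pmf (fst \<theta>) si > 0 \<and> pmf (fst \<theta>) sj > 0 \<longrightarrow>
        JSD \<alpha> \<omega> (mlaw \<theta> si) (mlaw \<theta> sj) \<le> ereal \<epsilon>)"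

text \<open>Isotropic Gaussian N(0, sigma^2 I_d) on R^d (sigma is the standard deviation).\<close>
definition gauss_vec :: "real \<Rightarrow> 'a::euclidean_space measure" where
  "gauss_vec \<sigma> = density lborel (\<lambda>x. ennreal ((2 * pi * \<sigma>\<^sup>2) powr (- real DIM('a) / 2)
       * exp (- (norm x)\<^sup>2 / (2 * \<sigma>\<^sup>2))))"

definition gauss_mech_law :: "('x \<Rightarrow> 'a::euclidean_space) \<Rightarrow> real \<Rightarrow> ('s, 'x) prior \<Rightarrow> 's \<Rightarrow> 'a measure" where
  "gauss_mech_law f \<sigma> \<theta> s = distr (snd \<theta> s \<Otimes>\<^sub>M gauss_vec \<sigma>) borel (\<lambda>(x, n). f x + n)"

end

theory Submission
  imports Defs
begin

text \<open>Projected onto a unit direction \<open>u\<close>, the output \<open>f(X) + N\<close> given \<open>S = s\<close> is a Gaussian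
  mixture over the law of \<open>\<langle>f(X), u\<rangle>\<close>. Mixing the two conditional laws through a coupling of
  almost minimal \<open>W\<^sub>\<infinity>\<close> cost and applying Hoelder's inequality bounds the Renyi moment of the slice by
  \<open>exp (c (\<Delta>\<^sup>u\<^sub>\<infinity>)\<^sup>2)\<close>. So if Joint-SRPP failed, then \<open>exp ((\<alpha> - 1) \<epsilon>)\<close> would lie strictly below the
  \<open>\<omega>\<close>-mean of a measurable function \<open>h\<close> with values in \<open>[1, b]\<close> and
  \<open>h u \<le> exp (c (\<Delta>\<^sup>u\<^sub>\<infinity>)\<^sup>2)\<close>. By Hoeffding's inequality the empirical mean of \<open>h(U\<^sub>l)\<close> plus the
  deviation term stays above that mean except with probability \<open>\<gamma>/4\<close>; where moreover the
  \<open>\<Delta>(U\<^sub>l)\<close> are dominated by their estimates, the tested inequality must therefore fail.\<close>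

section \<open>Gaussian noise vectors\<close>

lemma sets_gauss_vec [simp, measurable_cong]: "sets (gauss_vec \<sigma>) = sets borel"
  unfolding gauss_vec_def by simp

lemma normal_density_measurable [measurable (raw)]:
  assumes [measurable]: "f \<in> borel_measurable M" "g \<in> borel_measurable M"
  shows "(\<lambda>x. normal_density (f x) \<sigma> (g x)) \<in> borel_measurable M"
  unfolding normal_density_def by measurable

lemma normal_density_le: "\<sigma> > 0 \<Longrightarrow> normal_density \<mu> \<sigma> x \<le> 1 / sqrt (2 * pi * \<sigma>\<^sup>2)"
  unfolding normal_density_def by (intro mult_left_le) auto

lemma gauss_vec_density_eq_prod_normal_density:
  fixes f :: "'a::euclidean_space \<Rightarrow> real"
  assumes \<sigma>: "\<sigma> > 0"
  shows "(2 * pi * \<sigma>\<^sup>2) powr (- real DIM('a) / 2) * exp (- (norm (\<Sum>b\<in>Basis. f b *\<^sub>R b))\<^sup>2 / (2 * \<sigma>\<^sup>2))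
    = (\<Prod>b\<in>Basis. normal_density 0 \<sigma> (f b))"
proof -
  let ?v = "\<Sum>b\<in>(Basis::'a set). f b *\<^sub>R b"
  have "(norm ?v)\<^sup>2 = (\<Sum>b\<in>Basis. (?v \<bullet> b) * (?v \<bullet> b))"
    unfolding power2_norm_eq_inner by (rule euclidean_inner)
  then have norm_v: "(norm ?v)\<^sup>2 = (\<Sum>b\<in>Basis. (f b)\<^sup>2)"
    by (simp add: inner_sum_left inner_Basis if_distrib power2_eq_square sum.delta cong: if_cong)
  have pos: "2 * pi * \<sigma>\<^sup>2 > 0"
    using \<sigma> by simp
  then have "1 / sqrt (2 * pi * \<sigma>\<^sup>2) = (2 * pi * \<sigma>\<^sup>2) powr (- (1 / 2))"
    by (simp only: powr_minus_divide powr_half_sqrt less_imp_le)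
  then have "(1 / sqrt (2 * pi * \<sigma>\<^sup>2)) ^ DIM('a) = (2 * pi * \<sigma>\<^sup>2) powr (real DIM('a) * (- (1 / 2)))"
    using pos by (simp only: powr_power)
  then have const: "(1 / sqrt (2 * pi * \<sigma>\<^sup>2)) ^ DIM('a) = (2 * pi * \<sigma>\<^sup>2) powr (- real DIM('a) / 2)"
    by simp
  have "(\<Prod>b\<in>(Basis::'a set). normal_density 0 \<sigma> (f b)) =
      (\<Prod>b\<in>(Basis::'a set). 1 / sqrt (2 * pi * \<sigma>\<^sup>2) * exp (- (f b)\<^sup>2 / (2 * \<sigma>\<^sup>2)))"
    by (simp add: normal_density_def)
  also have "\<dots> =
      (\<Prod>b\<in>(Basis::'a set). 1 / sqrt (2 * pi * \<sigma>\<^sup>2)) * (\<Prod>b\<in>(Basis::'a set). exp (- (f b)\<^sup>2 / (2 * \<sigma>\<^sup>2)))"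
    by (rule prod.distrib)
  also have "\<dots> = (1 / sqrt (2 * pi * \<sigma>\<^sup>2)) ^ DIM('a) * exp (\<Sum>b\<in>Basis. - (f b)\<^sup>2 / (2 * \<sigma>\<^sup>2))"
    by (simp only: exp_sum[OF finite_Basis] prod_constant)
  also have "(\<Sum>b\<in>(Basis::'a set). - (f b)\<^sup>2 / (2 * \<sigma>\<^sup>2)) = - (norm ?v)\<^sup>2 / (2 * \<sigma>\<^sup>2)"
    by (simp add: norm_v sum_divide_distrib sum_negf)
  finally show ?thesis
    unfolding const by simp
qed

lemma gauss_vec_eq_distr_PiM:
  assumes \<sigma>: "\<sigma> > 0"
  shows "(gauss_vec \<sigma> :: 'a::euclidean_space measure) =
    distr (\<Pi>\<^sub>M b\<in>Basis. density lborel (normal_density 0 \<sigma>)) borel (\<lambda>f. \<Sum>b\<in>Basis. f b *\<^sub>R b)"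
proof -
  let ?N = "density lborel (\<lambda>x. ennreal (normal_density 0 \<sigma> x))"
  let ?L = "\<Pi>\<^sub>M b\<in>(Basis::'a set). (lborel::real measure)"
  let ?\<phi> = "\<lambda>f. \<Sum>b\<in>(Basis::'a set). f b *\<^sub>R b"
  define g :: "'a \<Rightarrow> ennreal" where "g x = ennreal ((2 * pi * \<sigma>\<^sup>2) powr (- real DIM('a) / 2)
       * exp (- (norm x)\<^sup>2 / (2 * \<sigma>\<^sup>2)))" for x
  have [measurable]: "g \<in> borel_measurable borel" "?\<phi> \<in> measurable ?L borel"
    unfolding g_def by measurable
  have g_\<phi>: "g (?\<phi> f) = (\<Prod>b\<in>Basis. ennreal (normal_density 0 \<sigma> (f b)))" for f
    unfolding g_def gauss_vec_density_eq_prod_normal_density[OF \<sigma>]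
    by (simp add: prod_ennreal normal_density_nonneg)
  have "gauss_vec \<sigma> = density (distr ?L borel ?\<phi>) g"
    unfolding gauss_vec_def g_def by (subst lborel_eq) simp
  also have "\<dots> = distr (density ?L (\<lambda>f. g (?\<phi> f))) borel ?\<phi>"
    by (rule density_distr) measurable
  also have "density ?L (\<lambda>f. g (?\<phi> f)) = (\<Pi>\<^sub>M b\<in>(Basis::'a set). ?N)"
  proof (rule product_sigma_finite.PiM_eqI)
    show "product_sigma_finite (\<lambda>_. ?N)"
      using prob_space_normal_density[OF \<sigma>]
      by (simp add: product_sigma_finite_def prob_space_imp_sigma_finite)
  next
    fix A assume A: "\<And>i. i \<in> (Basis::'a set) \<Longrightarrow> A i \<in> sets ?N"
    then have [measurable]: "i \<in> Basis \<Longrightarrow> A i \<in> sets borel" for i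
      by simp
    have "emeasure (density ?L (\<lambda>f. g (?\<phi> f))) (Pi\<^sub>E Basis A) =
        (\<integral>\<^sup>+ f. g (?\<phi> f) * indicator (Pi\<^sub>E Basis A) f \<partial>?L)"
      by (rule emeasure_density) (simp_all add: sets_PiM_I_finite)
    also have "\<dots> = (\<integral>\<^sup>+ f. (\<Prod>b\<in>Basis. ennreal (normal_density 0 \<sigma> (f b)) * indicator (A b) (f b)) \<partial>?L)"
      by (intro nn_integral_cong) (auto simp: g_\<phi> prod.distrib indicator_def space_PiM PiE_def Pi_def)
    also have "\<dots> = (\<Prod>b\<in>Basis. \<integral>\<^sup>+ x. ennreal (normal_density 0 \<sigma> x) * indicator (A b) x \<partial>lborel)"
      by (rule product_sigma_finite.product_nn_integral_prod)
        (auto simp: product_sigma_finite_def sigma_finite_lborel)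
    finally show "emeasure (density ?L (\<lambda>f. g (?\<phi> f))) (Pi\<^sub>E Basis A) = (\<Prod>b\<in>Basis. emeasure ?N (A b))"
      by (simp add: emeasure_density A)
  qed (simp_all cong: sets_PiM_cong)
  finally show ?thesis .
qed

lemma prob_space_gauss_vec: "\<sigma> > 0 \<Longrightarrow> prob_space (gauss_vec \<sigma> :: 'a::euclidean_space measure)"
  unfolding gauss_vec_eq_distr_PiM
  by (intro prob_space.prob_space_distr prob_space_PiM prob_space_normal_density) auto

lemma indep_vars_PiM_components:
  assumes "finite I" "I \<noteq> {}" and "\<And>i. i \<in> I \<Longrightarrow> prob_space (M i)"
  shows "prob_space.indep_vars (\<Pi>\<^sub>M i\<in>I. M i) M (\<lambda>i f. f i) I"
proof -
  interpret prob_space "\<Pi>\<^sub>M i\<in>I. M i"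
    using assms by (intro prob_space_PiM) auto
  have "distr (\<Pi>\<^sub>M i\<in>I. M i) (\<Pi>\<^sub>M i\<in>I. M i) (\<lambda>f. \<lambda>i\<in>I. f i) = (\<Pi>\<^sub>M i\<in>I. M i)"
    by (subst distr_cong[where g="\<lambda>f. f"])
      (auto simp: space_PiM PiE_def extensional_restrict cong: sets_PiM_cong)
  also have "\<dots> = (\<Pi>\<^sub>M i\<in>I. distr (\<Pi>\<^sub>M i\<in>I. M i) (M i) (\<lambda>f. f i))"
    using assms by (intro PiM_cong refl) (simp add: distr_PiM_component)
  finally show ?thesis
    using assms by (subst indep_vars_iff_distr_eq_PiM') auto
qed

lemma distr_PiM_normal_weighted_sum:
  fixes w :: "'i \<Rightarrow> real"
  assumes I: "finite I" and \<sigma>: "\<sigma> > 0" and w: "(\<Sum>i\<in>I. (w i)\<^sup>2) = 1"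
  defines "N \<equiv> density lborel (\<lambda>x. ennreal (normal_density 0 \<sigma> x))"
  shows "distr (\<Pi>\<^sub>M i\<in>I. N) borel (\<lambda>f. \<Sum>i\<in>I. w i * f i) = N"
proof -
  let ?\<Pi> = "\<Pi>\<^sub>M i\<in>I. N"
  have N: "prob_space N"
    unfolding N_def using \<sigma> by (rule prob_space_normal_density)
  interpret \<Pi>: prob_space ?\<Pi>
    using N by (intro prob_space_PiM)
  define J where "J = {i\<in>I. w i \<noteq> 0}"
  have w_J: "(\<Sum>i\<in>J. (w i)\<^sup>2) = 1"
    using w I unfolding J_def by (subst sum.mono_neutral_left) auto
  have J: "finite J" "J \<noteq> {}"
    using I w_J unfolding J_def by (simp, metis empty_Collect_eq sum.empty zero_neq_one)
  have indep: "\<Pi>.indep_vars (\<lambda>_. borel) (\<lambda>i f. w i * f i) J"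
    using \<Pi>.indep_vars_compose2[OF \<Pi>.indep_vars_subset[OF indep_vars_PiM_components[of I "\<lambda>_. N"]],
        of J "\<lambda>i x. w i * x" "\<lambda>_. borel"] J N I
    by (auto simp: J_def N_def)
  have component: "distributed ?\<Pi> lborel (\<lambda>f. f i) (normal_density 0 \<sigma>)" if "i \<in> I" for i
  proof -
    have "distr ?\<Pi> lborel (\<lambda>f. f i) = distr ?\<Pi> N (\<lambda>f. f i)"
      by (rule distr_cong) (simp_all add: N_def)
    also have "\<dots> = N"
      using that N by (intro distr_PiM_component)
    finally show ?thesis
      using that unfolding distributed_def N_def by auto
  qed
  have "distributed ?\<Pi> lborel (\<lambda>f. \<Sum>i\<in>J. w i * f i)
      (normal_density (\<Sum>i\<in>J. 0) (sqrt (\<Sum>i\<in>J. (\<bar>w i\<bar> * \<sigma>)\<^sup>2)))"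
  proof (rule \<Pi>.sum_indep_normal[OF J indep])
    show "distributed ?\<Pi> lborel (\<lambda>f. w i * f i) (normal_density 0 (\<bar>w i\<bar> * \<sigma>))" if "i \<in> J" for i
      using \<Pi>.normal_density_affine[OF component, of i "w i" 0] that \<sigma> by (auto simp: J_def)
  qed (use \<sigma> in \<open>auto simp: J_def\<close>)
  moreover have "sqrt (\<Sum>i\<in>J. (\<bar>w i\<bar> * \<sigma>)\<^sup>2) = \<sigma>"
    using w_J \<sigma> by (simp add: power_mult_distrib sum_distrib_right[symmetric])
  moreover have "(\<Sum>i\<in>I. w i * f i) = (\<Sum>i\<in>J. w i * f i)" for f
    using I unfolding J_def by (intro sum.mono_neutral_right) auto
  ultimately have "distr ?\<Pi> lborel (\<lambda>f. \<Sum>i\<in>I. w i * f i) = N"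
    by (simp add: distributed_def N_def)
  then show ?thesis
    by (subst distr_cong[OF refl sets_lborel[symmetric] refl]) simp_all
qed

lemma distr_gauss_vec_inner:
  fixes u :: "'a::euclidean_space"
  assumes \<sigma>: "\<sigma> > 0" and u: "norm u = 1"
  shows "distr (gauss_vec \<sigma> :: 'a measure) borel (\<lambda>n. n \<bullet> u) =
    density lborel (\<lambda>x. ennreal (normal_density 0 \<sigma> x))"
proof -
  let ?\<Pi> = "\<Pi>\<^sub>M b\<in>(Basis::'a set). density lborel (\<lambda>x. ennreal (normal_density 0 \<sigma> x))"
  have "(\<Sum>b\<in>Basis. (b \<bullet> u)\<^sup>2) = u \<bullet> u"
    by (subst euclidean_inner[of u u]) (simp add: power2_eq_square inner_commute)
  then have "distr ?\<Pi> borel (\<lambda>f. \<Sum>b\<in>Basis. (b \<bullet> u) * f b) =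
      density lborel (\<lambda>x. ennreal (normal_density 0 \<sigma> x))"
    using u by (intro distr_PiM_normal_weighted_sum[OF finite_Basis \<sigma>]) (simp add: power2_norm_eq_inner[symmetric])
  moreover have "(\<Sum>b\<in>Basis. f b *\<^sub>R b) \<bullet> u = (\<Sum>b\<in>Basis. (b \<bullet> u) * f b)" for f :: "'a \<Rightarrow> real"
    by (simp add: inner_sum_left mult.commute)
  then have "distr (gauss_vec \<sigma> :: 'a measure) borel (\<lambda>n. n \<bullet> u) =
      distr ?\<Pi> borel (\<lambda>f. \<Sum>b\<in>Basis. (b \<bullet> u) * f b)"
    unfolding gauss_vec_eq_distr_PiM[OF \<sigma>] by (subst distr_distr) (auto simp: comp_def)
  ultimately show ?thesis
    by simp
qed

lemma proj_meas_add_gauss_vec: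
  fixes F :: "'x \<Rightarrow> 'a::euclidean_space"
  assumes M: "prob_space M" and F[measurable]: "F \<in> borel_measurable M"
    and \<sigma>: "\<sigma> > 0" and u: "norm u = 1"
  shows "proj_meas u (distr (M \<Otimes>\<^sub>M gauss_vec \<sigma>) borel (\<lambda>(x, n). F x + n))
     = density lborel (\<lambda>z. \<integral>\<^sup>+ a. ennreal (normal_density a \<sigma> z) \<partial>proj_meas u (distr M borel F))"
  (is "?L = density lborel ?p")
proof -
  let ?G = "gauss_vec \<sigma> :: 'a measure"
  let ?\<mu> = "distr M borel (\<lambda>x. F x \<bullet> u)"
  interpret G: prob_space ?G
    by (rule prob_space_gauss_vec[OF \<sigma>])
  interpret \<mu>: prob_space ?\<mu>
    by (rule prob_space.prob_space_distr[OF M]) simp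
  interpret \<mu>_lborel: pair_sigma_finite ?\<mu> lborel
    by (simp add: pair_sigma_finite_def \<mu>.sigma_finite_measure_axioms sigma_finite_lborel)
  have proj_F: "proj_meas u (distr M borel F) = ?\<mu>"
    unfolding proj_meas_def by (subst distr_distr) (auto simp: comp_def)
  have shifted_noise: "(\<integral>\<^sup>+ n. indicator A (c + n \<bullet> u) \<partial>?G) =
      (\<integral>\<^sup>+ z. ennreal (normal_density c \<sigma> z) * indicator A z \<partial>lborel)" if [measurable]: "A \<in> sets borel" for A c
  proof -
    have "(\<integral>\<^sup>+ n. indicator A (c + n \<bullet> u) \<partial>?G) = (\<integral>\<^sup>+ t. indicator A (c + t) \<partial>distr ?G borel (\<lambda>n. n \<bullet> u))"
      by (subst nn_integral_distr) auto
    also have "\<dots> = (\<integral>\<^sup>+ t. ennreal (normal_density 0 \<sigma> t) * indicator A (c + t) \<partial>lborel)"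
      unfolding distr_gauss_vec_inner[OF \<sigma> u] by (subst nn_integral_density) auto
    also have "\<dots> = (\<integral>\<^sup>+ z. ennreal (normal_density 0 \<sigma> (z - c)) * indicator A z \<partial>lborel)"
      by (subst nn_integral_real_affine[of _ 1 c]) auto
    finally show ?thesis
      by (simp add: normal_density_def)
  qed
  show ?thesis
  proof (rule measure_eqI)
    fix A :: "real set" assume A_L: "A \<in> sets ?L"
    then have A[measurable]: "A \<in> sets borel"
      by (simp add: proj_meas_def)
    have "emeasure ?L A = (\<integral>\<^sup>+ a. indicator A a \<partial>?L)"
      using A_L by simp
    also have "\<dots> = (\<integral>\<^sup>+ p. indicator A ((F (fst p) + snd p) \<bullet> u) \<partial>(M \<Otimes>\<^sub>M ?G))"
      unfolding proj_meas_def
      by (subst nn_integral_distr; simp?)+ (auto intro!: nn_integral_cong simp: split_beta')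
    also have "\<dots> = (\<integral>\<^sup>+ x. \<integral>\<^sup>+ n. indicator A (F x \<bullet> u + n \<bullet> u) \<partial>?G \<partial>M)"
      by (subst G.nn_integral_fst[symmetric]) (auto simp: inner_add_left)
    also have "\<dots> = (\<integral>\<^sup>+ c. \<integral>\<^sup>+ z. ennreal (normal_density c \<sigma> z) * indicator A z \<partial>lborel \<partial>?\<mu>)"
      by (subst nn_integral_distr) (auto intro!: lborel.borel_measurable_nn_integral simp: shifted_noise)
    also have "\<dots> = (\<integral>\<^sup>+ z. \<integral>\<^sup>+ c. ennreal (normal_density c \<sigma> z) * indicator A z \<partial>?\<mu> \<partial>lborel)"
      by (rule \<mu>_lborel.Fubini'[symmetric]) measurable
    also have "\<dots> = emeasure (density lborel ?p) A"
      by (subst emeasure_density) (auto intro!: nn_integral_cong simp: nn_integral_multc proj_F)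
    finally show "emeasure ?L A = emeasure (density lborel ?p) A" .
  qed (simp add: proj_meas_def)
qed

section \<open>Renyi moments of Gaussian mixtures\<close>

lemma normal_density_powr_mult_powr:
  assumes \<sigma>: "\<sigma> > 0"
  shows "normal_density x \<sigma> z powr \<alpha> * normal_density y \<sigma> z powr (1 - \<alpha>) =
    exp (\<alpha> * (\<alpha> - 1) * (x - y)\<^sup>2 / (2 * \<sigma>\<^sup>2)) * normal_density (\<alpha> * x + (1 - \<alpha>) * y) \<sigma> z"
proof -
  define C where "C = 1 / sqrt (2 * pi * \<sigma>\<^sup>2)"
  have C: "C > 0"
    unfolding C_def using \<sigma> by simp
  define E1 where "E1 = -(z - x)\<^sup>2 / (2 * \<sigma>\<^sup>2)"
  define E2 where "E2 = -(z - y)\<^sup>2 / (2 * \<sigma>\<^sup>2)"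
  have "normal_density x \<sigma> z powr \<alpha> * normal_density y \<sigma> z powr (1 - \<alpha>)
      = (C * exp E1) powr \<alpha> * (C * exp E2) powr (1 - \<alpha>)"
    by (simp add: normal_density_def C_def E1_def E2_def)
  also have "\<dots> = (C powr \<alpha> * C powr (1 - \<alpha>)) * (exp E1 powr \<alpha> * exp E2 powr (1 - \<alpha>))"
    using C by (simp add: powr_mult)
  also have "C powr \<alpha> * C powr (1 - \<alpha>) = C"
    using C by (simp add: powr_add[symmetric])
  also have "exp E1 powr \<alpha> * exp E2 powr (1 - \<alpha>) = exp (\<alpha> * E1 + (1 - \<alpha>) * E2)"
    by (simp add: powr_def exp_add[symmetric] mult.commute)
  also have "\<alpha> * E1 + (1 - \<alpha>) * E2 =
      \<alpha> * (\<alpha> - 1) * (x - y)\<^sup>2 / (2 * \<sigma>\<^sup>2) + (-(z - (\<alpha> * x + (1 - \<alpha>) * y))\<^sup>2 / (2 * \<sigma>\<^sup>2))"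
    unfolding E1_def E2_def using \<sigma> by (simp add: field_simps power2_eq_square)
  finally show ?thesis
    unfolding exp_add by (simp add: normal_density_def C_def)
qed

lemma nn_integral_normal_density_powr_mult_powr:
  assumes \<sigma>: "\<sigma> > 0"
  shows "(\<integral>\<^sup>+ z. ennreal (normal_density x \<sigma> z powr \<alpha> * normal_density y \<sigma> z powr (1 - \<alpha>)) \<partial>lborel) =
    ennreal (exp (\<alpha> * (\<alpha> - 1) * (x - y)\<^sup>2 / (2 * \<sigma>\<^sup>2)))"
proof -
  let ?m = "\<alpha> * x + (1 - \<alpha>) * y"
  have "(\<integral>\<^sup>+ z. ennreal (normal_density ?m \<sigma> z) \<partial>lborel) = 1"
    using prob_space.emeasure_space_1[OF prob_space_normal_density[OF \<sigma>, of ?m]]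
    by (simp add: emeasure_density)
  then show ?thesis
    unfolding normal_density_powr_mult_powr[OF \<sigma>]
    by (simp add: ennreal_mult' nn_integral_cmult)
qed

lemma Young_powr_mult_powr:
  fixes a b I J \<alpha> :: real
  assumes a: "a > 0" and b: "b > 0" and I: "I > 0" and J: "J > 0" and \<alpha>: "\<alpha> > 1"
  shows "a / (I powr (1 / \<alpha>) * J powr (1 - 1 / \<alpha>)) \<le>
     (1 / \<alpha>) * ((a powr \<alpha> * b powr (1 - \<alpha>)) / I) + (1 - 1 / \<alpha>) * (b / J)"
proof -
  let ?H = "a powr \<alpha> * b powr (1 - \<alpha>)"
  have H: "?H > 0"
    using a b by simp
  have "(?H / I) powr (1 / \<alpha>) = a * b powr ((1 - \<alpha>) / \<alpha>) / I powr (1 / \<alpha>)"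
    using a b I H \<alpha> by (simp add: powr_divide powr_mult powr_powr)
  moreover have "(b / J) powr (1 - 1 / \<alpha>) = b powr (1 - 1 / \<alpha>) / J powr (1 - 1 / \<alpha>)"
    using b J by (simp add: powr_divide)
  moreover have "b powr ((1 - \<alpha>) / \<alpha>) * b powr (1 - 1 / \<alpha>) = 1"
  proof -
    have "(1 - \<alpha>) / \<alpha> + (1 - 1 / \<alpha>) = 0"
      using \<alpha> by (simp add: field_simps)
    then show ?thesis
      using b by (simp flip: powr_add)
  qed
  ultimately have "(?H / I) powr (1 / \<alpha>) * (b / J) powr (1 - 1 / \<alpha>) = a / (I powr (1 / \<alpha>) * J powr (1 - 1 / \<alpha>))"
    by (simp add: field_simps)
  moreover have "(?H / I) powr (1 / \<alpha>) * (b / J) powr (1 - 1 / \<alpha>) \<le> (1 / \<alpha>) * (?H / I) + (1 - 1 / \<alpha>) * (b / J)"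
    by (rule Youngs_inequality_0) (use \<alpha> H I b J in auto)
  ultimately show ?thesis
    by simp
qed

lemma (in prob_space) integral_pos:
  fixes f :: "'a \<Rightarrow> real"
  assumes "integrable M f" and "\<And>x. f x > 0"
  shows "(\<integral>x. f x \<partial>M) > 0"
  using integral_less_AE_space[of "\<lambda>_. 0" f] assms by (simp add: emeasure_space_1)

text \<open>Hoelder's inequality with exponents \<open>\<alpha>\<close> and \<open>\<alpha> / (\<alpha> - 1)\<close>, i.e. the joint convexity of
  \<open>(a, b) \<mapsto> a powr \<alpha> * b powr (1 - \<alpha>)\<close>.\<close>
lemma (in prob_space) integral_powr_mult_powr_le:
  fixes A B :: "'a \<Rightarrow> real"
  assumes [measurable]: "A \<in> borel_measurable M" "B \<in> borel_measurable M"
    and A: "\<And>x. 0 < A x" "\<And>x. A x \<le> CA" and B: "\<And>x. 0 < B x" "\<And>x. B x \<le> CB" and \<alpha>: "\<alpha> > 1"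
  shows "ennreal ((\<integral>x. A x \<partial>M) powr \<alpha> * (\<integral>x. B x \<partial>M) powr (1 - \<alpha>))
      \<le> (\<integral>\<^sup>+ x. ennreal (A x powr \<alpha> * B x powr (1 - \<alpha>)) \<partial>M)"
proof (cases "(\<integral>\<^sup>+ x. ennreal (A x powr \<alpha> * B x powr (1 - \<alpha>)) \<partial>M) = \<infinity>")
  case False
  let ?H = "\<lambda>x. A x powr \<alpha> * B x powr (1 - \<alpha>)"
  have H: "?H x > 0" for x
    using A(1)[of x] B(1)[of x] by simp
  have H_int: "integrable M ?H"
    by (rule integrableI_nonneg) (use H False in \<open>auto simp: top.not_eq_extremum\<close>)
  have A_int: "integrable M A" and B_int: "integrable M B"
    using A B by (auto intro!: integrable_const_bound AE_I2 simp: abs_of_pos)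
  define I where "I = (\<integral>x. ?H x \<partial>M)"
  define J where "J = (\<integral>x. B x \<partial>M)"
  define K where "K = I powr (1 / \<alpha>) * J powr (1 - 1 / \<alpha>)"
  have IJ: "I > 0" "J > 0" and A_pos: "(\<integral>x. A x \<partial>M) > 0"
    unfolding I_def J_def using H_int H B_int B A_int A by (auto intro!: integral_pos)
  then have K: "K > 0"
    unfolding K_def by simp
  have "(\<integral>x. A x \<partial>M) / K = (\<integral>x. A x / K \<partial>M)"
    by simp
  also have "\<dots> \<le> (\<integral>x. (1 / \<alpha>) * (?H x / I) + (1 - 1 / \<alpha>) * (B x / J) \<partial>M)"
    using A_int H_int B_int Young_powr_mult_powr[OF A(1) B(1) IJ \<alpha>]
    by (intro integral_mono) (auto simp: K_def)
  also have "\<dots> = 1"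
    using H_int B_int IJ by (simp add: I_def J_def)
  finally have "(\<integral>x. A x \<partial>M) powr \<alpha> \<le> K powr \<alpha>"
    using A_pos K \<alpha> by (intro powr_mono2) (auto simp: divide_le_eq)
  also have "K powr \<alpha> = I * J powr (\<alpha> - 1)"
  proof -
    have "(1 - 1 / \<alpha>) * \<alpha> = \<alpha> - 1"
      using \<alpha> by (simp add: field_simps)
    then show ?thesis
      using IJ \<alpha> by (simp add: K_def powr_mult powr_powr)
  qed
  finally have "(\<integral>x. A x \<partial>M) powr \<alpha> * J powr (1 - \<alpha>) \<le> I"
    using IJ by (simp add: powr_diff powr_minus field_simps)
  moreover have "(\<integral>\<^sup>+ x. ennreal (?H x) \<partial>M) = ennreal I"
    unfolding I_def using H_int H by (intro nn_integral_eq_integral) (auto intro: less_imp_le)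
  ultimately show ?thesis
    by (simp add: J_def ennreal_leI)
qed simp

lemma renyi_moment_density_lborel:
  fixes p q :: "real \<Rightarrow> real"
  assumes [measurable]: "p \<in> borel_measurable borel" "q \<in> borel_measurable borel"
    and p: "\<And>z. p z > 0" and q: "\<And>z. q z > 0"
  shows "renyi_moment \<alpha> (density lborel p) (density lborel q) =
    (\<integral>\<^sup>+ z. ennreal (p z powr \<alpha> * q z powr (1 - \<alpha>)) \<partial>lborel)"
proof -
  let ?P = "density lborel p" and ?Q = "density lborel q"
  have q_ne: "q z \<noteq> 0" for z
    using q[of z] by simp
  have P_density: "?P = density ?Q (\<lambda>z. ennreal (p z / q z))"
    by (subst density_density_eq)
      (auto intro!: density_cong AE_I2 simp: ennreal_mult'[symmetric] p q q_ne less_imp_le)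
  interpret Q: sigma_finite_measure ?Q
    by (subst sigma_finite_measure.sigma_finite_iff_density_finite[OF sigma_finite_lborel]) auto
  have RN: "AE z in ?Q. RN_deriv ?Q ?P z = ennreal (p z / q z)"
    by (rule AE_symmetric[OF Q.RN_deriv_unique]) (auto simp: P_density)
  have "absolutely_continuous ?Q ?P"
    unfolding absolutely_continuous_def
  proof
    fix N assume "N \<in> null_sets ?Q"
    then have N: "N \<in> sets borel" "AE z in lborel. z \<in> N \<longrightarrow> ennreal (q z) = 0"
      by (subst (asm) null_sets_density_iff; simp)+
    from N(2) have "AE z in lborel. z \<in> N \<longrightarrow> ennreal (p z) = 0"
      by eventually_elim (use q in \<open>auto simp: less_le\<close>)
    then show "N \<in> null_sets ?P"
      using N by (subst null_sets_density_iff) auto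
  qed
  then have "renyi_moment \<alpha> ?P ?Q = (\<integral>\<^sup>+ z. ennreal (enn2real (RN_deriv ?Q ?P z) powr \<alpha>) \<partial>?Q)"
    by (simp add: renyi_moment_def)
  also have "\<dots> = (\<integral>\<^sup>+ z. ennreal ((p z / q z) powr \<alpha>) \<partial>?Q)"
    using RN by (intro nn_integral_cong_AE, eventually_elim) (simp add: p q less_imp_le)
  also have "\<dots> = (\<integral>\<^sup>+ z. ennreal (q z) * ennreal ((p z / q z) powr \<alpha>) \<partial>lborel)"
    by (subst nn_integral_density) auto
  also have "\<dots> = (\<integral>\<^sup>+ z. ennreal (p z powr \<alpha> * q z powr (1 - \<alpha>)) \<partial>lborel)"
  proof (intro nn_integral_cong)
    fix z
    have "q z * (p z / q z) powr \<alpha> = p z powr \<alpha> * (q z / q z powr \<alpha>)"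
      using p[of z] q[of z] by (simp add: powr_divide)
    also have "q z / q z powr \<alpha> = q z powr (1 - \<alpha>)"
      using q[of z] by (simp add: powr_diff)
    finally show "ennreal (q z) * ennreal ((p z / q z) powr \<alpha>) = ennreal (p z powr \<alpha> * q z powr (1 - \<alpha>))"
      using q[of z] by (simp add: ennreal_mult'[symmetric])
  qed
  finally show ?thesis .
qed

lemma (in prob_space) gauss_mixture_density:
  fixes Z :: "'a \<Rightarrow> real"
  assumes [measurable]: "Z \<in> borel_measurable M" and \<sigma>: "\<sigma> > 0"
  shows "(\<lambda>z. \<integral>\<^sup>+ x. ennreal (normal_density (Z x) \<sigma> z) \<partial>M) =
      (\<lambda>z. ennreal (\<integral>x. normal_density (Z x) \<sigma> z \<partial>M))"
    and "(\<integral>x. normal_density (Z x) \<sigma> z \<partial>M) > 0"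
    and "(\<lambda>z. \<integral>x. normal_density (Z x) \<sigma> z \<partial>M) \<in> borel_measurable borel"
proof -
  have int: "integrable M (\<lambda>x. normal_density (Z x) \<sigma> z)" for z
    by (rule integrable_const_bound[where B="1 / sqrt (2 * pi * \<sigma>\<^sup>2)"])
      (auto intro!: AE_I2 simp: normal_density_le[OF \<sigma>] abs_of_nonneg)
  show eq: "(\<lambda>z. \<integral>\<^sup>+ x. ennreal (normal_density (Z x) \<sigma> z) \<partial>M) =
      (\<lambda>z. ennreal (\<integral>x. normal_density (Z x) \<sigma> z \<partial>M))"
    by (intro ext nn_integral_eq_integral int) auto
  show "(\<integral>x. normal_density (Z x) \<sigma> z \<partial>M) > 0"
    by (intro integral_pos int normal_density_pos[OF \<sigma>])
  have "(\<lambda>z. enn2real (\<integral>\<^sup>+ x. ennreal (normal_density (Z x) \<sigma> z) \<partial>M)) \<in> borel_measurable borel"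
    by measurable
  then show "(\<lambda>z. \<integral>x. normal_density (Z x) \<sigma> z \<partial>M) \<in> borel_measurable borel"
    unfolding eq by (simp add: integral_nonneg less_imp_le normal_density_pos[OF \<sigma>])
qed

lemma (in prob_space) renyi_moment_gauss_mixture_le:
  fixes X Y :: "'a \<Rightarrow> real"
  assumes X[measurable]: "X \<in> borel_measurable M" and Y[measurable]: "Y \<in> borel_measurable M"
    and \<sigma>: "\<sigma> > 0" and \<alpha>: "\<alpha> > 1" and r: "AE x in M. \<bar>X x - Y x\<bar> \<le> r"
  shows "renyi_moment \<alpha> (density lborel (\<lambda>z. \<integral>\<^sup>+ x. ennreal (normal_density (X x) \<sigma> z) \<partial>M))
                       (density lborel (\<lambda>z. \<integral>\<^sup>+ x. ennreal (normal_density (Y x) \<sigma> z) \<partial>M))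
      \<le> ennreal (exp (\<alpha> * (\<alpha> - 1) * r\<^sup>2 / (2 * \<sigma>\<^sup>2)))"
proof -
  interpret M_lborel: pair_sigma_finite M lborel
    by (simp add: pair_sigma_finite_def sigma_finite_measure_axioms sigma_finite_lborel)
  let ?H = "\<lambda>x z. ennreal (normal_density (X x) \<sigma> z powr \<alpha> * normal_density (Y x) \<sigma> z powr (1 - \<alpha>))"
  have "renyi_moment \<alpha> (density lborel (\<lambda>z. \<integral>\<^sup>+ x. ennreal (normal_density (X x) \<sigma> z) \<partial>M))
                       (density lborel (\<lambda>z. \<integral>\<^sup>+ x. ennreal (normal_density (Y x) \<sigma> z) \<partial>M))
      = (\<integral>\<^sup>+ z. ennreal ((\<integral>x. normal_density (X x) \<sigma> z \<partial>M) powr \<alpha> *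
                         (\<integral>x. normal_density (Y x) \<sigma> z \<partial>M) powr (1 - \<alpha>)) \<partial>lborel)"
    unfolding gauss_mixture_density(1)[OF X \<sigma>] gauss_mixture_density(1)[OF Y \<sigma>]
    by (intro renyi_moment_density_lborel gauss_mixture_density \<sigma>) simp_all
  also have "\<dots> \<le> (\<integral>\<^sup>+ z. \<integral>\<^sup>+ x. ?H x z \<partial>M \<partial>lborel)"
    by (intro nn_integral_mono integral_powr_mult_powr_le[where CA="1 / sqrt (2 * pi * \<sigma>\<^sup>2)" and CB="1 / sqrt (2 * pi * \<sigma>\<^sup>2)"]
        normal_density_pos normal_density_le \<sigma> \<alpha>) simp_all
  also have "\<dots> = (\<integral>\<^sup>+ x. \<integral>\<^sup>+ z. ?H x z \<partial>lborel \<partial>M)"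
    by (rule M_lborel.Fubini') measurable
  also have "\<dots> = (\<integral>\<^sup>+ x. ennreal (exp (\<alpha> * (\<alpha> - 1) * (X x - Y x)\<^sup>2 / (2 * \<sigma>\<^sup>2))) \<partial>M)"
    by (simp add: nn_integral_normal_density_powr_mult_powr[OF \<sigma>])
  also have "\<dots> \<le> (\<integral>\<^sup>+ x. ennreal (exp (\<alpha> * (\<alpha> - 1) * r\<^sup>2 / (2 * \<sigma>\<^sup>2))) \<partial>M)"
  proof (rule nn_integral_mono_AE)
    show "AE x in M. ennreal (exp (\<alpha> * (\<alpha> - 1) * (X x - Y x)\<^sup>2 / (2 * \<sigma>\<^sup>2)))
        \<le> ennreal (exp (\<alpha> * (\<alpha> - 1) * r\<^sup>2 / (2 * \<sigma>\<^sup>2)))"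
      using r
    proof eventually_elim
      case (elim x)
      then have "(X x - Y x)\<^sup>2 \<le> r\<^sup>2"
        by (metis abs_ge_zero abs_le_square_iff abs_of_nonneg order_trans)
      then show ?case
        using \<alpha> by (intro ennreal_leI) (simp add: divide_right_mono mult_left_mono)
    qed
  qed
  finally show ?thesis
    by (simp add: emeasure_space_1)
qed

lemma AE_le_of_SUP_msupp_less:
  fixes \<pi> :: "(real \<times> real) measure"
  assumes sets_\<pi>: "sets \<pi> = sets borel"
    and SUP_less: "(SUP z\<in>msupp \<pi>. ereal \<bar>fst z - snd z\<bar>) < ereal r"
  shows "AE w in \<pi>. \<bar>fst w - snd w\<bar> \<le> r"
proof -
  define \<B> where "\<B> = {ball z e | z e. e > 0 \<and> emeasure \<pi> (ball z e) = 0}"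
  obtain \<B>' where \<B>': "\<B>' \<subseteq> \<B>" "countable \<B>'" "\<Union>\<B>' = \<Union>\<B>"
    using Lindelof[of \<B>] unfolding \<B>_def by auto
  have "(\<Union>S\<in>\<B>'. S) \<in> null_sets \<pi>"
  proof (rule null_sets_UN'[OF \<B>'(2)])
    fix S assume "S \<in> \<B>'"
    then obtain z e where "S = ball z e" "emeasure \<pi> (ball z e) = 0"
      using \<B>'(1) unfolding \<B>_def by auto
    then show "S \<in> null_sets \<pi>"
      using sets_\<pi> by auto
  qed
  then have "\<Union>\<B>' \<in> null_sets \<pi>"
    by simp
  then show ?thesis
  proof (rule AE_I', safe)
    fix w assume "w \<in> space \<pi>" and w: "\<not> \<bar>fst w - snd w\<bar> \<le> r"
    have "w \<notin> msupp \<pi>"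
    proof
      assume "w \<in> msupp \<pi>"
      then have "ereal \<bar>fst w - snd w\<bar> < ereal r"
        using SUP_less by (meson SUP_upper le_less_trans)
      with w show False
        by simp
    qed
    then obtain e where "e > 0" "emeasure \<pi> (ball w e) = 0"
      unfolding msupp_def by (auto simp: not_less)
    then have "ball w e \<in> \<B>"
      unfolding \<B>_def by blast
    with \<open>e > 0\<close> have "w \<in> \<Union>\<B>"
      by (metis UnionI centre_in_ball)
    then show "w \<in> \<Union>\<B>'"
      using \<B>'(3) by simp
  qed
qed

lemma ennreal_le_of_tendsto_at_right:
  fixes g :: "real \<Rightarrow> real"
  assumes "(g \<longlongrightarrow> L) (at_right 0)" and "\<And>\<delta>. \<delta> > 0 \<Longrightarrow> x \<le> ennreal (g \<delta>)"
  shows "x \<le> ennreal L"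
proof (rule tendsto_le[of "at_right 0" "\<lambda>\<delta>. ennreal (g \<delta>)" _ "\<lambda>_. x"])
  show "\<forall>\<^sub>F \<delta> in at_right 0. x \<le> ennreal (g \<delta>)"
    using eventually_at_right_less[of "0::real"] by eventually_elim (rule assms(2))
qed (auto intro: tendsto_ennrealI assms(1))

text \<open>Since \<open>ln 0 = 0\<close>, a vanishing Renyi moment yields \<open>renyi_div = 0\<close>, whence the bound \<open>1 \<le> B\<close>.\<close>
lemma ereal_exp_renyi_div_le:
  assumes \<alpha>: "\<alpha> > 1" and moment: "renyi_moment \<alpha> P Q \<le> ennreal B" and B: "1 \<le> B"
  shows "ereal_exp (ereal (\<alpha> - 1) * renyi_div \<alpha> P Q) \<le> ennreal B"
proof (cases "renyi_moment \<alpha> P Q = \<infinity>")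
  case False
  then obtain m where m: "renyi_moment \<alpha> P Q = ennreal m" "m \<ge> 0"
    by (cases "renyi_moment \<alpha> P Q") auto
  have "ereal (\<alpha> - 1) * renyi_div \<alpha> P Q = ereal (ln m)"
    using \<alpha> m by (simp add: renyi_div_def)
  moreover have "exp (ln m) \<le> B"
    using m moment B by (cases "m = 0") (auto simp: ennreal_le_iff)
  ultimately show ?thesis
    by (simp add: ereal_exp_def ennreal_leI)
qed (use moment in \<open>simp add: top_unique\<close>)

lemma renyi_moment_proj_gauss_mech_le:
  fixes f :: "'x \<Rightarrow> 'a::euclidean_space"
  assumes M1: "prob_space M1" "f \<in> borel_measurable M1" and M2: "prob_space M2" "f \<in> borel_measurable M2"
    and \<sigma>: "\<sigma> > 0" and \<alpha>: "\<alpha> > 1" and u: "norm u = 1"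
    and W: "W_inf (proj_meas u (distr M1 borel f)) (proj_meas u (distr M2 borel f)) \<le> ereal D"
  shows "renyi_moment \<alpha> (proj_meas u (distr (M1 \<Otimes>\<^sub>M gauss_vec \<sigma>) borel (\<lambda>(x, n). f x + n)))
                       (proj_meas u (distr (M2 \<Otimes>\<^sub>M gauss_vec \<sigma>) borel (\<lambda>(x, n). f x + n)))
      \<le> ennreal (exp (\<alpha> * (\<alpha> - 1) / (2 * \<sigma>\<^sup>2) * D\<^sup>2))"
proof (rule ennreal_le_of_tendsto_at_right)
  \<comment> \<open>The infimum defining \<open>W_inf\<close> need not be attained: use couplings of cost below \<open>D + \<delta>\<close>.\<close>
  show "((\<lambda>\<delta>. exp (\<alpha> * (\<alpha> - 1) / (2 * \<sigma>\<^sup>2) * (D + \<delta>)\<^sup>2)) \<longlongrightarrow> exp (\<alpha> * (\<alpha> - 1) / (2 * \<sigma>\<^sup>2) * D\<^sup>2))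
      (at_right 0)"
    using \<sigma> by (auto intro!: tendsto_eq_intros)
next
  fix \<delta> :: real assume "\<delta> > 0"
  then have "W_inf (proj_meas u (distr M1 borel f)) (proj_meas u (distr M2 borel f)) < ereal (D + \<delta>)"
    using W by (simp add: le_less_trans)
  then obtain \<pi> where \<pi>: "\<pi> \<in> couplings (proj_meas u (distr M1 borel f)) (proj_meas u (distr M2 borel f))"
    and SUP_less: "(SUP z\<in>msupp \<pi>. ereal \<bar>fst z - snd z\<bar>) < ereal (D + \<delta>)"
    unfolding W_inf_def INF_less_iff by blast
  then have sets_\<pi>: "sets \<pi> = sets borel" and "prob_space \<pi>"
    and marginals: "distr \<pi> borel fst = proj_meas u (distr M1 borel f)"
                   "distr \<pi> borel snd = proj_meas u (distr M2 borel f)"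
    unfolding couplings_def by auto
  interpret \<pi>: prob_space \<pi> by fact
  have [measurable]: "fst \<in> borel_measurable \<pi>" "snd \<in> borel_measurable \<pi>"
    by (simp_all add: measurable_cong_sets[OF sets_\<pi> refl] borel_prod[symmetric])
  have "renyi_moment \<alpha> (proj_meas u (distr (M1 \<Otimes>\<^sub>M gauss_vec \<sigma>) borel (\<lambda>(x, n). f x + n)))
                       (proj_meas u (distr (M2 \<Otimes>\<^sub>M gauss_vec \<sigma>) borel (\<lambda>(x, n). f x + n)))
      = renyi_moment \<alpha> (density lborel (\<lambda>z. \<integral>\<^sup>+ w. ennreal (normal_density (fst w) \<sigma> z) \<partial>\<pi>))
                       (density lborel (\<lambda>z. \<integral>\<^sup>+ w. ennreal (normal_density (snd w) \<sigma> z) \<partial>\<pi>))"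
    unfolding proj_meas_add_gauss_vec[OF M1 \<sigma> u] proj_meas_add_gauss_vec[OF M2 \<sigma> u]
    by (simp add: marginals[symmetric] nn_integral_distr)
  also have "\<dots> \<le> ennreal (exp (\<alpha> * (\<alpha> - 1) * (D + \<delta>)\<^sup>2 / (2 * \<sigma>\<^sup>2)))"
    by (intro \<pi>.renyi_moment_gauss_mixture_le AE_le_of_SUP_msupp_less[OF sets_\<pi> SUP_less] \<sigma> \<alpha>)
      measurable
  finally show "renyi_moment \<alpha> (proj_meas u (distr (M1 \<Otimes>\<^sub>M gauss_vec \<sigma>) borel (\<lambda>(x, n). f x + n)))
                       (proj_meas u (distr (M2 \<Otimes>\<^sub>M gauss_vec \<sigma>) borel (\<lambda>(x, n). f x + n)))
      \<le> ennreal (exp (\<alpha> * (\<alpha> - 1) / (2 * \<sigma>\<^sup>2) * (D + \<delta>)\<^sup>2))"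
    by simp
qed

lemma JSD_le_of_nn_integral_le:
  assumes \<alpha>: "\<alpha> > 1"
    and "(\<integral>\<^sup>+ u. ereal_exp (ereal (\<alpha> - 1) * renyi_div \<alpha> (proj_meas u P) (proj_meas u Q)) \<partial>\<omega>)
      \<le> ennreal (exp ((\<alpha> - 1) * \<epsilon>))"
  shows "JSD \<alpha> \<omega> P Q \<le> ereal \<epsilon>"
proof -
  define I where "I = (\<integral>\<^sup>+ u. ereal_exp (ereal (\<alpha> - 1) * renyi_div \<alpha> (proj_meas u P) (proj_meas u Q)) \<partial>\<omega>)"
  have I: "I \<le> ennreal (exp ((\<alpha> - 1) * \<epsilon>))"
    using assms(2) by (simp add: I_def)
  show ?thesis
  proof (cases "I = 0")
    case False
    with I obtain r where r: "I = ennreal r" "r > 0" "r \<le> exp ((\<alpha> - 1) * \<epsilon>)"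
      by (cases I) (auto simp: top_unique ennreal_le_iff)
    then have "ln r \<le> (\<alpha> - 1) * \<epsilon>"
      using ln_le_cancel_iff[of r "exp ((\<alpha> - 1) * \<epsilon>)"] by simp
    then have "ln r / (\<alpha> - 1) \<le> \<epsilon>"
      using \<alpha> by (simp add: divide_le_eq mult.commute)
    then show ?thesis
      using r by (simp add: JSD_def I_def[symmetric] ennreal_ln_def)
  qed (use \<alpha> in \<open>simp add: JSD_def I_def[symmetric] ennreal_ln_def\<close>)
qed

section \<open>Measurable minorants and sample means\<close>

lemma (in prob_space) prob_Int_ge:
  assumes "A \<in> events" "B \<in> events"
  shows "prob (A \<inter> B) \<ge> prob A + prob B - 1"
proof -
  have "prob (A \<inter> B) = prob A - prob (A - B)"
    using assms by (simp add: finite_measure_Diff' Diff_Diff_Int inf_commute)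
  moreover have "prob (A - B) \<le> prob (space M - B)"
    using assms by (intro finite_measure_mono) (auto dest: sets.sets_into_space)
  ultimately show ?thesis
    using assms by (simp add: prob_compl)
qed

text \<open>\<open>F\<close> need not be measurable; \<open>\<integral>\<^sup>+ F\<close> is still approached by integrals of simple minorants.\<close>
lemma (in prob_space) bounded_measurable_minorant:
  fixes F :: "'a \<Rightarrow> ennreal" and g :: "'a \<Rightarrow> real"
  assumes S: "S \<in> events" "AE u in M. u \<in> S"
    and F_le: "\<And>u. u \<in> S \<Longrightarrow> F u \<le> ennreal (g u)"
    and g: "\<And>u. u \<in> S \<Longrightarrow> a \<le> g u \<and> g u \<le> b" and ab: "0 \<le> a" "a \<le> b"
    and K: "0 \<le> K" "ennreal K < (\<integral>\<^sup>+ u. F u \<partial>M)"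
  obtains h where "h \<in> borel_measurable M" "\<And>u. a \<le> h u \<and> h u \<le> b"
    "\<And>u. u \<in> S \<Longrightarrow> h u \<le> g u" "\<And>u. u \<notin> S \<Longrightarrow> h u = a" "K < (\<integral>u. h u \<partial>M)"
proof -
  obtain s where s: "simple_function M s" "s \<le> F" "ennreal K < integral\<^sup>S M s"
    using K(2) unfolding nn_integral_def less_SUP_iff by blast
  have [measurable]: "s \<in> borel_measurable M"
    using s(1) by (rule borel_measurable_simple_function)
  define h where "h u = (if u \<in> S then min b (max a (enn2real (s u))) else a)" for u
  have h_meas: "h \<in> borel_measurable M"
    unfolding h_def using S(1) by measurable
  have h_bounds: "a \<le> h u \<and> h u \<le> b" for u
    using ab by (auto simp: h_def)
  have s_le_h: "s u \<le> ennreal (h u)" and h_le_g: "h u \<le> g u" if u: "u \<in> S" for u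
  proof -
    have "s u \<le> ennreal (g u)"
      using s(2) F_le[OF u] by (auto simp: le_fun_def intro: order_trans)
    then obtain r where r: "s u = ennreal r" "0 \<le> r" "r \<le> g u"
      using g[OF u] ab by (cases "s u") (auto simp: ennreal_le_iff top_unique)
    then have "h u = max a r"
      using u g[OF u] by (simp add: h_def)
    then show "s u \<le> ennreal (h u)" "h u \<le> g u"
      using r g[OF u] by (auto intro: ennreal_leI)
  qed
  have h_int: "integrable M h"
  proof (intro integrable_const_bound[where B=b] AE_I2 h_meas)
    show "norm (h u) \<le> b" for u
      using h_bounds[of u] ab by simp
  qed
  have "ennreal K < (\<integral>\<^sup>+ u. s u \<partial>M)"
    using s by (simp add: nn_integral_eq_simple_integral)
  also have "\<dots> \<le> (\<integral>\<^sup>+ u. ennreal (h u) \<partial>M)"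
    using S(2) by (intro nn_integral_mono_AE, eventually_elim) (rule s_le_h)
  also have "\<dots> = ennreal (\<integral>u. h u \<partial>M)"
    using h_bounds ab by (intro nn_integral_eq_integral h_int) (auto intro: order_trans)
  finally have "K < (\<integral>u. h u \<partial>M)"
    using K(1) by (simp add: ennreal_less_iff)
  with h_meas h_bounds h_le_g show ?thesis
    by (intro that[of h]) (auto simp: h_def)
qed

lemma (in prob_space) sample_mean_lower_deviation:
  fixes U :: "'i \<Rightarrow> 'a \<Rightarrow> 'b" and g :: "'b \<Rightarrow> real"
  assumes I: "finite I" "I \<noteq> {}" and indep: "indep_vars (\<lambda>_. N) U I"
    and U_distr: "\<And>i. i \<in> I \<Longrightarrow> distr M N (U i) = \<nu>"
    and g[measurable]: "g \<in> borel_measurable N" and g_bounds: "\<And>u. a \<le> g u \<and> g u \<le> b"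
    and t: "0 \<le> t"
  obtains E where "E \<in> events" "prob E \<ge> 1 - exp (- t)"
    "\<And>x. x \<in> E \<Longrightarrow> (\<integral>u. g u \<partial>\<nu>) - (b - a) * sqrt (t / (2 * real (card I))) \<le> (\<Sum>i\<in>I. g (U i x)) / real (card I)"
proof -
  obtain i0 where i0: "i0 \<in> I"
    using I by blast
  have U_meas[measurable]: "i \<in> I \<Longrightarrow> U i \<in> measurable M N" for i
    using indep unfolding indep_vars_def2 by blast
  have expectation_eq: "expectation (\<lambda>x. g (U i x)) = (\<integral>u. g u \<partial>\<nu>)" if "i \<in> I" for i
    using integral_distr[OF U_meas[OF that] g] U_distr[OF that] by simp
  define n where "n = card I"
  have n: "real n > 0"
    using I by (simp add: n_def card_gt_0_iff)
  define \<epsilon> where "\<epsilon> = (b - a) * sqrt (t / (2 * n))"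
  have "a \<le> b"
    using g_bounds order_trans by blast
  then consider "a = b" | "a < b"
    by linarith
  then show ?thesis
  proof cases
    case 1
    then have "g = (\<lambda>_. a)"
      using g_bounds by (intro ext antisym) auto
    moreover have "prob_space \<nu>"
      using U_distr[OF i0] prob_space_distr[OF U_meas[OF i0]] by simp
    ultimately show ?thesis
      using 1 I by (intro that[of "space M"]) (simp_all add: prob_space.prob_space prob_space)
  next
    case 2
    let ?B = "{x\<in>space M. (\<Sum>i\<in>I. g (U i x)) / n \<le> (\<integral>u. g u \<partial>\<nu>) - \<epsilon>}"
    interpret H: Hoeffding_ineq_iid M I "\<lambda>i x. g (U i x)" "\<lambda>x. g (U i0 x)" a b "\<integral>u. g u \<partial>\<nu>"
    proof unfold_locales
      show "indep_vars (\<lambda>_. borel) (\<lambda>i x. g (U i x)) I"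
        by (rule indep_vars_compose2[OF indep]) simp
      show "distr M borel (\<lambda>x. g (U i x)) = distr M borel (\<lambda>x. g (U i0 x))" if "i \<in> I" for i
        using U_distr[OF that] U_distr[OF i0] distr_distr[OF g U_meas[OF that]] distr_distr[OF g U_meas[OF i0]]
        by (simp add: comp_def)
    qed (use I i0 g_bounds expectation_eq in auto)
    have "prob ?B \<le> exp (- 2 * n * \<epsilon>\<^sup>2 / (b - a)\<^sup>2)"
      using H.Hoeffding_ineq_le'[of \<epsilon>] 2 I t by (simp add: \<epsilon>_def n_def)
    also have "- 2 * n * \<epsilon>\<^sup>2 / (b - a)\<^sup>2 = - t"
      using n 2 t by (simp add: \<epsilon>_def power_mult_distrib)
    finally have "prob ?B \<le> exp (- t)" .
    then show ?thesis
      by (intro that[of "space M - ?B"]) (auto simp: prob_compl n_def \<epsilon>_def)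
  qed
qed

lemma (in prob_space) sample_mean_estimate_exceeds:
  fixes U :: "nat \<Rightarrow> 'a \<Rightarrow> 'b" and h :: "'b \<Rightarrow> real" and Y :: "nat \<Rightarrow> 'a \<Rightarrow> real"
  assumes m: "m > 0" and indep: "indep_vars (\<lambda>_. N) U {1..m}"
    and U_distr: "\<And>l. l \<in> {1..m} \<Longrightarrow> distr M N (U l) = \<nu>"
    and h: "h \<in> borel_measurable N" "\<And>u. a \<le> h u \<and> h u \<le> b" and K: "K < (\<integral>u. h u \<partial>\<nu>)"
    and \<gamma>: "0 < \<gamma>" "\<gamma> \<le> 1"
    and A: "A \<in> events" "prob A \<ge> 1 - \<gamma> / 2" "\<And>x l. x \<in> A \<Longrightarrow> l \<in> {1..m} \<Longrightarrow> h (U l x) \<le> Y l x"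
  obtains E where "E \<in> events" "prob E \<ge> 1 - \<gamma>"
    "\<And>x. x \<in> E \<Longrightarrow> K < (1 / real m) * (\<Sum>l=1..m. Y l x) + (b - a) * sqrt (ln (4 / \<gamma>) / (2 * real m))"
proof -
  let ?t = "(b - a) * sqrt (ln (4 / \<gamma>) / (2 * real m))"
  have "0 \<le> ln (4 / \<gamma>)"
    using \<gamma> by simp
  then obtain E where E: "E \<in> events" "prob E \<ge> 1 - exp (- ln (4 / \<gamma>))"
    and mean: "\<And>x. x \<in> E \<Longrightarrow> (\<integral>u. h u \<partial>\<nu>) - (b - a) * sqrt (ln (4 / \<gamma>) / (2 * real (card {1..m})))
      \<le> (\<Sum>l=1..m. h (U l x)) / real (card {1..m})"
    using sample_mean_lower_deviation[OF finite_atLeastAtMost _ indep U_distr h] m by auto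
  show ?thesis
  proof (rule that[of "A \<inter> E"])
    show "A \<inter> E \<in> events"
      using A(1) E(1) by simp
    have "exp (- ln (4 / \<gamma>)) = \<gamma> / 4"
      using \<gamma> by (simp add: exp_minus)
    then show "prob (A \<inter> E) \<ge> 1 - \<gamma>"
      using prob_Int_ge[OF A(1) E(1)] A(2) E(2) \<gamma> by linarith
  next
    fix x assume x: "x \<in> A \<inter> E"
    have "(\<Sum>l=1..m. h (U l x)) \<le> (\<Sum>l=1..m. Y l x)"
      using x A(3) by (intro sum_mono) auto
    then have "(\<Sum>l=1..m. h (U l x)) / real m \<le> (1 / real m) * (\<Sum>l=1..m. Y l x)"
      using m by (simp add: divide_right_mono)
    then show "K < (1 / real m) * (\<Sum>l=1..m. Y l x) + ?t"
      using K mean[of x] x by simp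
  qed
qed

section \<open>The Gaussian mechanism\<close>

lemma slice_gauss_mech_le_Delta_inf:
  fixes f :: "'x \<Rightarrow> 'a::euclidean_space"
  assumes \<theta>: "\<theta> \<in> \<Theta>" "(si, sj) \<in> Q" "pmf (fst \<theta>) si > 0" "pmf (fst \<theta>) sj > 0"
    and priors: "prob_space (snd \<theta> si)" "sets (snd \<theta> si) = sets MX"
      "prob_space (snd \<theta> sj)" "sets (snd \<theta> sj) = sets MX"
    and f_meas: "f \<in> borel_measurable MX" and \<sigma>: "\<sigma> > 0" and \<alpha>: "\<alpha> > 1" and u: "norm u = 1"
    and D: "Delta_inf Q \<Theta> f u \<le> ereal D"
  shows "ereal_exp (ereal (\<alpha> - 1) * renyi_div \<alpha> (proj_meas u (gauss_mech_law f \<sigma> \<theta> si))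
      (proj_meas u (gauss_mech_law f \<sigma> \<theta> sj))) \<le> ennreal (exp (\<alpha> * (\<alpha> - 1) / (2 * \<sigma>\<^sup>2) * D\<^sup>2))"
proof (rule ereal_exp_renyi_div_le[OF \<alpha>])
  have "W_inf (proj_meas u (query_law f \<theta> si)) (proj_meas u (query_law f \<theta> sj)) \<le> Delta_inf Q \<Theta> f u"
    unfolding Delta_inf_def by (rule Sup_upper) (use \<theta> in blast)
  then have W: "W_inf (proj_meas u (query_law f \<theta> si)) (proj_meas u (query_law f \<theta> sj)) \<le> ereal D"
    using D by (rule order_trans)
  have "f \<in> borel_measurable (snd \<theta> si)" "f \<in> borel_measurable (snd \<theta> sj)"
    using f_meas by (simp_all add: measurable_cong_sets[OF priors(2) refl] measurable_cong_sets[OF priors(4) refl])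
  then show "renyi_moment \<alpha> (proj_meas u (gauss_mech_law f \<sigma> \<theta> si)) (proj_meas u (gauss_mech_law f \<sigma> \<theta> sj))
      \<le> ennreal (exp (\<alpha> * (\<alpha> - 1) / (2 * \<sigma>\<^sup>2) * D\<^sup>2))"
    using W unfolding gauss_mech_law_def query_law_def
    by (intro renyi_moment_proj_gauss_mech_le[OF priors(1) _ priors(3) _ \<sigma> \<alpha> u])
  show "1 \<le> exp (\<alpha> * (\<alpha> - 1) / (2 * \<sigma>\<^sup>2) * D\<^sup>2)"
    using \<alpha> by simp
qed

lemma slice_minorant_of_not_joint_SRPP:
  fixes f :: "'x \<Rightarrow> 'a::euclidean_space" and \<omega> :: "'a measure"
  assumes priors: "\<forall>\<theta>\<in>\<Theta>. \<forall>s. prob_space (snd \<theta> s) \<and> sets (snd \<theta> s) = sets MX"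
    and f_meas: "f \<in> borel_measurable MX"
    and \<omega>: "prob_space \<omega>" "sets \<omega> = sets borel" "emeasure \<omega> (sphere 0 1) = 1"
    and Delta_bd: "\<forall>u\<in>sphere 0 1. 0 \<le> Delta_inf Q \<Theta> f u \<and> Delta_inf Q \<Theta> f u \<le> ereal \<Delta>\<^sub>0"
    and \<alpha>: "\<alpha> > 1" and \<sigma>: "\<sigma> > 0"
    and not_SRPP: "\<not> joint_SRPP \<alpha> \<epsilon> \<omega> Q \<Theta> (gauss_mech_law f \<sigma>)"
  defines "c \<equiv> \<alpha> * (\<alpha> - 1) / (2 * \<sigma>\<^sup>2)"
  obtains h where "h \<in> borel_measurable borel" "\<And>u. 1 \<le> h u \<and> h u \<le> exp (c * \<Delta>\<^sub>0\<^sup>2)"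
    "\<And>u D. Delta_inf Q \<Theta> f u \<le> ereal D \<Longrightarrow> h u \<le> exp (c * D\<^sup>2)"
    "exp ((\<alpha> - 1) * \<epsilon>) < (\<integral>u. h u \<partial>\<omega>)"
proof -
  interpret \<omega>: prob_space \<omega> by fact
  obtain \<theta> si sj where \<theta>: "\<theta> \<in> \<Theta>" "(si, sj) \<in> Q" "pmf (fst \<theta>) si > 0" "pmf (fst \<theta>) sj > 0"
    and JSD: "ereal \<epsilon> < JSD \<alpha> \<omega> (gauss_mech_law f \<sigma> \<theta> si) (gauss_mech_law f \<sigma> \<theta> sj)"
    using not_SRPP unfolding joint_SRPP_def by (auto simp: not_le)
  define F where "F u = ereal_exp (ereal (\<alpha> - 1) * renyi_div \<alpha> (proj_meas u (gauss_mech_law f \<sigma> \<theta> si))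
    (proj_meas u (gauss_mech_law f \<sigma> \<theta> sj)))" for u
  define \<Delta> where "\<Delta> u = real_of_ereal (Delta_inf Q \<Theta> f u)" for u
  have \<Delta>: "Delta_inf Q \<Theta> f u = ereal (\<Delta> u)" "0 \<le> \<Delta> u" "\<Delta> u \<le> \<Delta>\<^sub>0" if "u \<in> sphere 0 1" for u
  proof -
    have "0 \<le> Delta_inf Q \<Theta> f u" "Delta_inf Q \<Theta> f u \<le> ereal \<Delta>\<^sub>0"
      using Delta_bd that by auto
    then show "Delta_inf Q \<Theta> f u = ereal (\<Delta> u)" "0 \<le> \<Delta> u" "\<Delta> u \<le> \<Delta>\<^sub>0"
      unfolding \<Delta>_def by (cases "Delta_inf Q \<Theta> f u"; simp)+
  qed
  have F_le: "F u \<le> ennreal (exp (c * (\<Delta> u)\<^sup>2))" if "u \<in> sphere 0 1" for u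
    unfolding F_def c_def using priors \<theta> that \<Delta>(1)[OF that]
    by (intro slice_gauss_mech_le_Delta_inf[OF \<theta> _ _ _ _ f_meas \<sigma> \<alpha>]) auto
  have c: "0 \<le> c"
    using \<alpha> by (simp add: c_def)
  have exp_sq_mono: "exp (c * x\<^sup>2) \<le> exp (c * y\<^sup>2)" if "0 \<le> x" "x \<le> y" for x y
    using that c by (simp add: mult_left_mono power_mono)
  have bounds: "1 \<le> exp (c * (\<Delta> u)\<^sup>2) \<and> exp (c * (\<Delta> u)\<^sup>2) \<le> exp (c * \<Delta>\<^sub>0\<^sup>2)" if "u \<in> sphere 0 1" for u
    using \<Delta>[OF that] c exp_sq_mono by simp
  have JSD_gt: "ennreal (exp ((\<alpha> - 1) * \<epsilon>)) < (\<integral>\<^sup>+ u. F u \<partial>\<omega>)"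
    using JSD_le_of_nn_integral_le[OF \<alpha>, of \<omega> "gauss_mech_law f \<sigma> \<theta> si" "gauss_mech_law f \<sigma> \<theta> sj" \<epsilon>] JSD
    unfolding F_def by (meson not_le)
  have S: "sphere 0 1 \<in> sets \<omega>"
    using \<omega>(2) by simp
  have AE_S: "AE u in \<omega>. u \<in> sphere 0 1"
    by (rule \<omega>.AE_prob_1) (use \<omega>(3) in \<open>simp add: \<omega>.emeasure_eq_measure\<close>)
  obtain h where h: "h \<in> borel_measurable \<omega>" "\<And>u. 1 \<le> h u \<and> h u \<le> exp (c * \<Delta>\<^sub>0\<^sup>2)"
    "\<And>u. u \<in> sphere 0 1 \<Longrightarrow> h u \<le> exp (c * (\<Delta> u)\<^sup>2)" "\<And>u. u \<notin> sphere 0 1 \<Longrightarrow> h u = 1"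
    "exp ((\<alpha> - 1) * \<epsilon>) < (\<integral>u. h u \<partial>\<omega>)"
    by (rule \<omega>.bounded_measurable_minorant[OF S AE_S F_le _ _ _ _ JSD_gt, where a=1 and b="exp (c * \<Delta>\<^sub>0\<^sup>2)"])
      (use bounds c in auto)
  show ?thesis
  proof (rule that[OF _ h(2) _ h(5)])
    show "h \<in> borel_measurable borel"
      using h(1) by (simp add: measurable_cong_sets[OF \<omega>(2) refl])
    show "h u \<le> exp (c * D\<^sup>2)" if D: "Delta_inf Q \<Theta> f u \<le> ereal D" for u D
    proof (cases "u \<in> sphere 0 1")
      case True
      then have "exp (c * (\<Delta> u)\<^sup>2) \<le> exp (c * D\<^sup>2)"
        using \<Delta>[OF True] D by (intro exp_sq_mono) auto
      then show ?thesis
        using h(3)[OF True] by linarith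
    qed (use h(4) c in simp)
  qed
qed

theorem theorem4:
  fixes Q :: "('s \<times> 's) set" and \<Theta> :: "('s, 'x) prior set"
    and MX :: "'x measure" and f :: "'x \<Rightarrow> 'a::euclidean_space"
    and \<omega> :: "'a measure"
    and P :: "'o measure" and U :: "nat \<Rightarrow> 'o \<Rightarrow> 'a" and Dhat :: "nat \<Rightarrow> 'o \<Rightarrow> real"
    and m :: nat and \<Delta>\<^sub>0 \<alpha> \<epsilon> \<gamma> \<sigma> :: real
  assumes priors: "\<forall>\<theta>\<in>\<Theta>. \<forall>s. prob_space (snd \<theta> s) \<and> sets (snd \<theta> s) = sets MX"
    and f_meas: "f \<in> borel_measurable MX"
    and \<omega>_prob: "prob_space \<omega>" and \<omega>_sets: "sets \<omega> = sets borel"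
    and \<omega>_sphere: "emeasure \<omega> (sphere 0 1) = 1"
    and \<omega>_cont: "\<forall>u. emeasure \<omega> {u} = 0"
    and P_prob: "prob_space P"
    and m_pos: "m > 0"
    and U_meas: "\<forall>l\<in>{1..m}. U l \<in> borel_measurable P"
    and U_indep: "prob_space.indep_vars P (\<lambda>_. borel) U {1..m}"
    and U_distr: "\<forall>l\<in>{1..m}. distr P borel (U l) = \<omega>"
    and Dhat_meas: "\<forall>l\<in>{1..m}. Dhat l \<in> borel_measurable P"
    and Delta_bd: "\<forall>u\<in>sphere 0 1. 0 \<le> Delta_inf Q \<Theta> f u \<and> Delta_inf Q \<Theta> f u \<le> ereal \<Delta>\<^sub>0"
    and \<alpha>: "\<alpha> > 1" and \<epsilon>: "\<epsilon> \<ge> 0" and \<gamma>: "0 < \<gamma>" "\<gamma> < 1"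
    and \<sigma>: "\<sigma> > 0"
    and Dhat_cover: "\<exists>A\<in>sets P. measure P A \<ge> 1 - \<gamma> / 2 \<and>
        (\<forall>x\<in>A. \<forall>l\<in>{1..m}. Delta_inf Q \<Theta> f (U l x) \<le> ereal (Dhat l x))"
  shows "\<exists>E\<in>sets P. measure P E \<ge> 1 - \<gamma> \<and>
    (\<forall>x\<in>E.
      (let c = \<alpha> * (\<alpha> - 1) / (2 * \<sigma>\<^sup>2);
           mu = (1 / real m) * (\<Sum>l=1..m. exp (c * (Dhat l x)\<^sup>2));
           b = exp (c * \<Delta>\<^sub>0\<^sup>2)
       in 1 / (\<alpha> - 1) * ln (mu + (b - 1) * sqrt (ln (4 / \<gamma>) / (2 * real m))) \<le> \<epsilon>)
      \<longrightarrow> joint_SRPP \<alpha> \<epsilon> \<omega> Q \<Theta> (gauss_mech_law f \<sigma>))"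
proof (cases "joint_SRPP \<alpha> \<epsilon> \<omega> Q \<Theta> (gauss_mech_law f \<sigma>)")
  case True
  then show ?thesis
    using P_prob \<gamma> by (intro bexI[of _ "space P"]) (auto simp: prob_space.prob_space)
next
  case False
  interpret P: prob_space P by (rule P_prob)
  define c where "c = \<alpha> * (\<alpha> - 1) / (2 * \<sigma>\<^sup>2)"
  obtain h where h: "h \<in> borel_measurable borel" "\<And>u. 1 \<le> h u \<and> h u \<le> exp (c * \<Delta>\<^sub>0\<^sup>2)"
    "\<And>u D. Delta_inf Q \<Theta> f u \<le> ereal D \<Longrightarrow> h u \<le> exp (c * D\<^sup>2)" "exp ((\<alpha> - 1) * \<epsilon>) < (\<integral>u. h u \<partial>\<omega>)"
    using slice_minorant_of_not_joint_SRPP[OF priors f_meas \<omega>_prob \<omega>_sets \<omega>_sphere Delta_bd \<alpha> \<sigma> False]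
    unfolding c_def by blast
  obtain A where A: "A \<in> sets P" "measure P A \<ge> 1 - \<gamma> / 2"
    "\<And>x l. x \<in> A \<Longrightarrow> l \<in> {1..m} \<Longrightarrow> h (U l x) \<le> exp (c * (Dhat l x)\<^sup>2)"
    using Dhat_cover h(3) by blast
  obtain E where E: "E \<in> sets P" "measure P E \<ge> 1 - \<gamma>" and exceeds: "\<And>x. x \<in> E \<Longrightarrow> exp ((\<alpha> - 1) * \<epsilon>) <
      (1 / real m) * (\<Sum>l=1..m. exp (c * (Dhat l x)\<^sup>2)) + (exp (c * \<Delta>\<^sub>0\<^sup>2) - 1) * sqrt (ln (4 / \<gamma>) / (2 * real m))"
    using P.sample_mean_estimate_exceeds[OF m_pos U_indep _ h(1,2,4) \<gamma>(1) _ A] U_distr \<gamma>(2) by auto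
  have "\<not> 1 / (\<alpha> - 1) * ln (\<mu> + t) \<le> \<epsilon>" if "exp ((\<alpha> - 1) * \<epsilon>) < \<mu> + t" for \<mu> t
  proof -
    have "(\<alpha> - 1) * \<epsilon> < ln (\<mu> + t)"
      using that by (metis exp_gt_zero ln_exp ln_less_cancel_iff order.strict_trans)
    then show ?thesis
      using \<alpha> by (simp add: field_simps)
  qed
  with E exceeds show ?thesis
    by (auto simp: Let_def c_def)
qed

end
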